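(* Let $a,b,c$ be positive numbers with $a<b<c$ and $b-a<c_0<a$, where $c_0=c-\lfloor c/b\rfloor b$. Let $H=[c_0+a-b,c_0)+a\mathbb Z$ and $\tilde H=[c-c_0,c-c_0+b-a)+a\mathbb Z$. Then: (i) $\mathcal S_{a,b,c}$ satisfies $R_{a,b,c}\mathcal S_{a,b,c}\subset\mathcal S_{a,b,c}$, $\tilde R_{a,b,c}\mathcal S_{a,b,c}\subset\mathcal S_{a,b,c}$ and $\mathcal S_{a,b,c}\cap(H\cup\tilde H)=\emptyset$; and every set $E\subset\mathbb R$ with $R_{a,b,c}E\subset E$, $\tilde R_{a,b,c}E\subset E$ and $E\cap(H\cup\tilde H)=\emptyset$ satisfies $E\subset\mathcal S_{a,b,c}$. (ii) $\mathbb R\setminus\mathcal S_{a,b,c}$ satisfies $R_{a,b,c}(\mathbb R\setminus\mathcal S_{a,b,c})\subset\mathbb R\setminus\mathcal S_{a,b,c}$, $\tilde R_{a,b,c}(\mathbb R\setminus\mathcal S_{a,b,c})\subset\mathbb R\setminus\mathcal S_{a,b,c}$ and contains $H\cup\tilde H$; and every set $F$ with $R_{a,b,c}F\subset F$, $\tilde R_{a,b,c}F\subset F$ and $H\cup\tilde H\subset F$ contains $\mathbb R\setminus\mathcal S_{a,b,c}$.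
   Context: For $a,b,c>0$ and $t\in\mathbb R$, $\mathbf M_{a,b,c}(t)=(\chi_{[0,c)}(t-\mu+\lambda))_{\mu\in a\mathbb Z,\lambda\in b\mathbb Z}$ is the infinite matrix with rows indexed by $a\mathbb Z$ and columns by $b\mathbb Z$, acting by $(\mathbf M_{a,b,c}(t)\mathbf x)(\mu)=\sum_{\lambda\in b\mathbb Z}\chi_{[0,c)}(t-\mu+\lambda)\mathbf x(\lambda)$. $\mathcal B_b$ is the set of vectors $(\mathbf x(\lambda))_{\lambda\in b\mathbb Z}$ with entries in $\{0,1\}$, and $\mathcal B_b^0=\{\mathbf x\in\mathcal B_b:\mathbf x(0)=1\}$. $\mathbf 1$ denotes the vector indexed by $a\mathbb Z$ with all entries $1$. $\mathcal S_{a,b,c}=\{t:\mathbf M_{a,b,c}(t)\mathbf x=\mathbf 1\text{ for some }\mathbf x\in\mathcal B_b^0\}$. With $c_0=c-\lfloor c/b\rfloor b$ and $b-a<c_0<a$, the piecewise linear maps $R_{a,b,c},\tilde R_{a,b,c}:\mathbb R\to\mathbb R$ are: $R_{a,b,c}(t)=t+\lfloor c/b\rfloor b+b$ if $t\in[0,c_0+a-b)+a\mathbb Z$, $R_{a,b,c}(t)=t$ if $t\in[c_0+a-b,c_0)+a\mathbb Z$, $R_{a,b,c}(t)=t+\lfloor c/b\rfloor b$ if $t\in[c_0,a)+a\mathbb Z$; $\tilde R_{a,b,c}(t)=t-\lfloor c/b\rfloor b$ if $t\in[c-a,c-c_0)+a\mathbb Z$, $\tilde R_{a,b,c}(t)=t$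 if $t\in[c-c_0,c-c_0+b-a)+a\mathbb Z$, $\tilde R_{a,b,c}(t)=t-\lfloor c/b\rfloor b-b$ if $t\in[c-c_0+b-a,c)+a\mathbb Z$. Here $A+a\mathbb Z=\{x+ak:x\in A,k\in\mathbb Z\}$. *)

theory Defs
  imports Complex_Main
begin

definition chi :: "real \<Rightarrow> real \<Rightarrow> real" where
  "chi c s = (if 0 \<le> s \<and> s < c then 1 else 0)"

(* (M_{a,b,c}(t) x)(a*m), where x is indexed by k \<in> \<int> standing for \<lambda> = b*k.
   Only finitely many terms are nonzero (b > 0), so the sum is over the finite support of chi. *)
definition Mapp :: "real \<Rightarrow> real \<Rightarrow> real \<Rightarrow> real \<Rightarrow> (int \<Rightarrow> real) \<Rightarrow> int \<Rightarrow> real" where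
  "Mapp a b c t x m =
     (\<Sum>k \<in> {k::int. 0 \<le> t - a * of_int m + b * of_int k \<and> t - a * of_int m + b * of_int k < c}.
        chi c (t - a * of_int m + b * of_int k) * x k)"

definition Bb0 :: "(int \<Rightarrow> real) set" where
  "Bb0 = {x. (\<forall>k. x k \<in> {0, 1}) \<and> x 0 = 1}"

definition Sabc :: "real \<Rightarrow> real \<Rightarrow> real \<Rightarrow> real set" where
  "Sabc a b c = {t. \<exists>x \<in> Bb0. \<forall>m::int. Mapp a b c t x m = 1}"

definition inmod :: "real \<Rightarrow> real \<Rightarrow> real \<Rightarrow> real \<Rightarrow> bool" where
  "inmod a l u t = (\<exists>k::int. l \<le> t - a * of_int k \<and> t - a * of_int k < u)"

definition c0 :: "real \<Rightarrow> real \<Rightarrow> real" where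
  "c0 b c = c - of_int \<lfloor>c / b\<rfloor> * b"

definition R :: "real \<Rightarrow> real \<Rightarrow> real \<Rightarrow> real \<Rightarrow> real" where
  "R a b c t =
     (if inmod a 0 (c0 b c + a - b) t then t + of_int \<lfloor>c / b\<rfloor> * b + b
      else if inmod a (c0 b c + a - b) (c0 b c) t then t
      else if inmod a (c0 b c) a t then t + of_int \<lfloor>c / b\<rfloor> * b
      else undefined)"

definition Rt :: "real \<Rightarrow> real \<Rightarrow> real \<Rightarrow> real \<Rightarrow> real" where
  "Rt a b c t =
     (if inmod a (c - a) (c - c0 b c) t then t - of_int \<lfloor>c / b\<rfloor> * b
      else if inmod a (c - c0 b c) (c - c0 b c + b - a) t then t
      else if inmod a (c - c0 b c + b - a) c t then t - of_int \<lfloor>c / b\<rfloor> * b - b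
      else undefined)"

definition H :: "real \<Rightarrow> real \<Rightarrow> real \<Rightarrow> real set" where
  "H a b c = {t. inmod a (c0 b c + a - b) (c0 b c) t}"

definition Ht :: "real \<Rightarrow> real \<Rightarrow> real \<Rightarrow> real set" where
  "Ht a b c = {t. inmod a (c - c0 b c) (c - c0 b c + b - a) t}"

end

theory Submission
  imports Defs "HOL-Library.Real_Mod"
begin

(* A point t lies in S_{a,b,c} iff it lies in a set P \<subseteq> t + b\<int> meeting every window
   [am, am + c) exactly once (the support of the 0/1 solution x).  For p \<in> P outside H, the
   point of P in the window following the a-cell of p is exactly R p; symmetrically for Rt and
   Ht.  Hence S is invariant under R and Rt and avoids H \<union> Ht.  Conversely, if t lies in an
   invariant set avoiding H \<union> Ht, its two-sided orbit under R advances by more than a per step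
   and keeps R^(i+1) t - c in the a-cell of R^i t, so it meets every window exactly once and
   t \<in> S.  Part (ii) is then formal: R and Rt fix H and Ht pointwise and are mutually inverse
   off them, so the complement of an invariant set is invariant. *)

lemma invariant_Compl:
  assumes "\<And>x. x \<in> A \<Longrightarrow> f x = x" and "\<And>x. x \<notin> A \<Longrightarrow> g (f x) = x"
    and "g ` S \<subseteq> S"
  shows "f ` (- S) \<subseteq> - S"
proof
  fix y assume "y \<in> f ` (- S)"
  then obtain x where x: "x \<notin> S" "y = f x" by auto
  show "y \<in> - S"
  proof (cases "x \<in> A")
    case False
    then have "x = g y" using x assms(2) by simp
    then show ?thesis using x assms(3) by auto
  qed (use x assms(1) in simp)
qed

lemma greatest_invariant_Compl:
  assumes fix_A: "\<And>x. x \<in> A \<Longrightarrow> f x = x" and fix_B: "\<And>x. x \<in> B \<Longrightarrow> g x = x"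
    and g_f: "\<And>x. x \<notin> A \<Longrightarrow> g (f x) = x" and f_g: "\<And>x. x \<notin> B \<Longrightarrow> f (g x) = x"
    and inv: "f ` S \<subseteq> S" "g ` S \<subseteq> S" and disj: "S \<inter> (A \<union> B) = {}"
    and greatest: "\<forall>E. f ` E \<subseteq> E \<and> g ` E \<subseteq> E \<and> E \<inter> (A \<union> B) = {} \<longrightarrow> E \<subseteq> S"
  shows "f ` (- S) \<subseteq> - S \<and> g ` (- S) \<subseteq> - S \<and> A \<union> B \<subseteq> - S
    \<and> (\<forall>F. f ` F \<subseteq> F \<and> g ` F \<subseteq> F \<and> A \<union> B \<subseteq> F \<longrightarrow> - S \<subseteq> F)"
proof -
  have "- S \<subseteq> F" if F: "f ` F \<subseteq> F" "g ` F \<subseteq> F" "A \<union> B \<subseteq> F" for F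
  proof -
    have "f ` (- F) \<subseteq> - F" by (rule invariant_Compl[of A f g F]) (use fix_A g_f F in auto)
    moreover have "g ` (- F) \<subseteq> - F" by (rule invariant_Compl[of B g f F]) (use fix_B f_g F in auto)
    moreover have "- F \<inter> (A \<union> B) = {}" using F(3) by blast
    ultimately have "- F \<subseteq> S" using greatest by simp
    then show ?thesis by blast
  qed
  moreover have "f ` (- S) \<subseteq> - S" by (rule invariant_Compl[of A f g S]) (use fix_A g_f inv in auto)
  moreover have "g ` (- S) \<subseteq> - S" by (rule invariant_Compl[of B g f S]) (use fix_B f_g inv in auto)
  moreover have "A \<union> B \<subseteq> - S" using disj by blast
  ultimately show ?thesis by simp
qed

lemma two_sided_orbit:
  assumes "f ` E \<subseteq> E" "g ` E \<subseteq> E" and f_g: "\<And>x. x \<in> E \<Longrightarrow> f (g x) = x" and "t \<in> E"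
  obtains p :: "int \<Rightarrow> 'a" where "p 0 = t" "\<And>i. p i \<in> E" "\<And>i. p (i + 1) = f (p i)"
proof
  define p where "p i = (if 0 \<le> i then (f ^^ nat i) t else (g ^^ nat (- i)) t)" for i :: int
  have "(h ^^ n) t \<in> E" if "h ` E \<subseteq> E" for h n
    by (induction n) (use that \<open>t \<in> E\<close> in auto)
  then show E: "p i \<in> E" for i
    unfolding p_def using assms(1,2) by simp
  show "p 0 = t" unfolding p_def by simp
  show "p (i + 1) = f (p i)" for i
  proof (cases "0 \<le> i")
    case True
    then have "nat (i + 1) = Suc (nat i)" by simp
    then show ?thesis unfolding p_def using True by simp
  next
    case False
    then have "nat (- i) = Suc (nat (- (i + 1)))" by simp
    then have "p i = g (p (i + 1))" unfolding p_def using False by simp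
    then show ?thesis using f_g[OF E] by simp
  qed
qed

definition meets_windows_once :: "real \<Rightarrow> real \<Rightarrow> real set \<Rightarrow> bool" where
  "meets_windows_once a c P \<longleftrightarrow> (\<forall>m::int. \<exists>!p. p \<in> P \<inter> {a * of_int m ..< a * of_int m + c})"

lemma meets_windows_onceD:
  assumes "meets_windows_once a c P"
  shows meets_windows_once_exists: "\<exists>p\<in>P. a * of_int m \<le> p \<and> p < a * of_int m + c"
    and meets_windows_once_unique: "\<lbrakk>p \<in> P; a * of_int m \<le> p; p < a * of_int m + c;
      q \<in> P; a * of_int m \<le> q; q < a * of_int m + c\<rbrakk> \<Longrightarrow> p = q"
proof -
  from assms obtain p where "p \<in> P \<inter> {a * of_int m ..< a * of_int m + c}"
    unfolding meets_windows_once_def by (meson ex1E)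
  then show "\<exists>p\<in>P. a * of_int m \<le> p \<and> p < a * of_int m + c" by auto
next
  assume "p \<in> P" "a * of_int m \<le> p" "p < a * of_int m + c"
    "q \<in> P" "a * of_int m \<le> q" "q < a * of_int m + c"
  then show "p = q" using assms unfolding meets_windows_once_def
    by (metis Int_iff atLeastLessThan_iff)
qed

lemma floor_divide_eq_iff:
  fixes a x :: real
  assumes "0 < a"
  shows "\<lfloor>x / a\<rfloor> = m \<longleftrightarrow> a * of_int m \<le> x \<and> x < a * of_int m + a"
  using assms by (simp add: floor_eq_iff le_divide_eq divide_less_eq algebra_simps)

context
  fixes a c :: real and p :: "int \<Rightarrow> real"
  assumes a: "0 < a" "a \<le> c"
    and step: "\<And>i. p i + a \<le> p (i + 1)"
    and cell: "\<And>i. \<lfloor>(p (i + 1) - c) / a\<rfloor> = \<lfloor>p i / a\<rfloor>"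
begin

lemma cell_sequence_mono: "i \<le> j \<Longrightarrow> p i \<le> p j"
proof -
  have "p i \<le> p (i + int n)" for n
  proof (induction n)
    case (Suc n)
    have "p (i + int (Suc n)) = p (i + int n + 1)" by (simp add: ac_simps)
    then show ?case using Suc step[of "i + int n"] a by linarith
  qed simp
  then show "i \<le> j \<Longrightarrow> p i \<le> p j" by (metis le_add_diff_inverse nat_0_le zle_iff_zadd)
qed

lemma cell_sequence_hits_window: "\<exists>i. a * of_int m \<le> p i \<and> p i < a * of_int m + c"
proof (induction m rule: int_induct[where k = "\<lfloor>p 0 / a\<rfloor>"])
  case base
  then show ?case using floor_divide_eq_iff[OF a(1), of "p 0"] a by force
next
  case (step1 m)
  then obtain i where i: "a * of_int m \<le> p i" "p i < a * of_int m + c" by blast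
  show ?case
  proof (cases "a * of_int (m + 1) \<le> p i")
    case True
    then show ?thesis using i a by (intro exI[of _ i]) (simp add: algebra_simps)
  next
    case False
    then have "\<lfloor>p i / a\<rfloor> = m" using floor_divide_eq_iff[OF a(1)] i by (simp add: algebra_simps)
    then have "p (i + 1) - c < a * of_int m + a"
      using cell[of i] floor_divide_eq_iff[OF a(1)] by metis
    moreover have "a * of_int m + a \<le> p (i + 1)" using step[of i] i by simp
    ultimately show ?thesis by (intro exI[of _ "i + 1"]) (simp add: algebra_simps)
  qed
next
  case (step2 m)
  then obtain i where i: "a * of_int m \<le> p i" "p i < a * of_int m + c" by blast
  show ?case
  proof (cases "p i < a * of_int (m - 1) + c")
    case True
    then show ?thesis using i a by (intro exI[of _ i]) (simp add: algebra_simps)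
  next
    case False
    then have "\<lfloor>(p i - c) / a\<rfloor> = m - 1"
      by (subst floor_divide_eq_iff[OF a(1)]) (use i in \<open>simp add: algebra_simps\<close>)
    then have "\<lfloor>p (i - 1) / a\<rfloor> = m - 1" using cell[of "i - 1"] by simp
    then show ?thesis using floor_divide_eq_iff[OF a(1)] a by (intro exI[of _ "i - 1"]) auto
  qed
qed

lemma cell_sequence_hits_window_unique:
  assumes "a * of_int m \<le> p i" "p i < a * of_int m + c"
    and "a * of_int m \<le> p j" "p j < a * of_int m + c" and "i \<le> j"
  shows "i = j"
proof (rule ccontr)
  assume "i \<noteq> j"
  have "\<lfloor>(p j - c) / a\<rfloor> < m"
    using assms(4) a(1) by (simp add: floor_less_iff divide_less_eq algebra_simps)
  then have "\<lfloor>p (j - 1) / a\<rfloor> < m" using cell[of "j - 1"] by simp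
  then have "p (j - 1) < a * of_int m"
    using a(1) by (simp add: floor_less_iff divide_less_eq mult.commute)
  moreover have "p i \<le> p (j - 1)" using cell_sequence_mono \<open>i \<le> j\<close> \<open>i \<noteq> j\<close> by simp
  ultimately show False using assms(1) by linarith
qed

lemma meets_windows_once_range: "meets_windows_once a c (range p)"
  unfolding meets_windows_once_def
proof
  fix m
  obtain i where i: "a * of_int m \<le> p i" "p i < a * of_int m + c" using cell_sequence_hits_window by blast
  show "\<exists>!x. x \<in> range p \<inter> {a * of_int m ..< a * of_int m + c}"
  proof (rule ex1I[of _ "p i"])
    fix y assume "y \<in> range p \<inter> {a * of_int m ..< a * of_int m + c}"
    then obtain j where "y = p j" "a * of_int m \<le> p j" "p j < a * of_int m + c" by auto
    then show "y = p i"
      using cell_sequence_hits_window_unique[of m i j] cell_sequence_hits_window_unique[of m j i] i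
      by (cases "i \<le> j") auto
  qed (use i in simp)
qed

end

definition in_single_coset :: "real \<Rightarrow> real set \<Rightarrow> bool" where
  "in_single_coset b P \<longleftrightarrow> (\<forall>p\<in>P. \<forall>q\<in>P. \<exists>k::int. q = p + b * of_int k)"

lemma in_single_coset_image: "in_single_coset b ((\<lambda>k. t + b * of_int k) ` X)"
  unfolding in_single_coset_def
proof clarify
  fix k1 k2 :: int
  show "\<exists>k::int. t + b * of_int k2 = t + b * of_int k1 + b * of_int k"
    by (rule exI[of _ "k2 - k1"]) (simp add: algebra_simps)
qed

lemma card_eq_1_iff_Ex1: "card A = 1 \<longleftrightarrow> (\<exists>!x. x \<in> A)"
  by (auto simp: card_1_singleton_iff)

lemma Mapp_eq_card:
  assumes "0 < b" and x01: "\<forall>k. x k \<in> {0, 1}"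
  shows "Mapp a b c t x m
    = card ((\<lambda>k. t + b * of_int k) ` {k. x k = 1} \<inter> {a * of_int m ..< a * of_int m + c})"
proof -
  define K where "K = {k::int. 0 \<le> t - a * of_int m + b * of_int k \<and> t - a * of_int m + b * of_int k < c}"
  have "K \<subseteq> {\<lceil>(a * of_int m - t) / b\<rceil> .. \<lfloor>(a * of_int m - t + c) / b\<rfloor>}"
    using assms(1) by (auto simp: K_def ceiling_le_iff le_floor_iff divide_le_eq le_divide_eq algebra_simps)
  then have "finite K" using finite_subset by blast
  have "Mapp a b c t x m = (\<Sum>k\<in>K. x k)"
    unfolding Mapp_def K_def by (rule sum.cong) (auto simp: chi_def)
  also have "\<dots> = (\<Sum>k\<in>K. if x k = 1 then 1 else 0)"
    using x01 by (intro sum.cong) auto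
  also have "\<dots> = card {k\<in>K. x k = 1}"
    using \<open>finite K\<close> by (simp add: sum.If_cases Int_def)
  also have "\<dots> = card ((\<lambda>k. t + b * of_int k) ` {k\<in>K. x k = 1})"
    using assms(1) by (subst card_image) (auto intro: inj_onI)
  also have "(\<lambda>k. t + b * of_int k) ` {k\<in>K. x k = 1}
      = (\<lambda>k. t + b * of_int k) ` {k. x k = 1} \<inter> {a * of_int m ..< a * of_int m + c}"
    by (auto simp: K_def algebra_simps)
  finally show ?thesis .
qed

lemma Sabc_iff:
  assumes "0 < b"
  shows "t \<in> Sabc a b c \<longleftrightarrow> (\<exists>P. t \<in> P \<and> in_single_coset b P \<and> meets_windows_once a c P)"
proof
  assume "t \<in> Sabc a b c"
  then obtain x where x01: "\<forall>k. x k \<in> {0, 1}" and x0: "x 0 = 1" and Mx: "\<forall>m. Mapp a b c t x m = 1"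
    unfolding Sabc_def Bb0_def by auto
  define P where "P = (\<lambda>k. t + b * of_int k) ` {k. x k = 1}"
  have "card (P \<inter> {a * of_int m ..< a * of_int m + c}) = 1" for m
    using Mapp_eq_card[OF assms x01, of a c t m] Mx unfolding P_def by simp
  then have "meets_windows_once a c P"
    unfolding meets_windows_once_def card_eq_1_iff_Ex1 by blast
  moreover have "t \<in> P" unfolding P_def using x0 by (auto intro: image_eqI[of _ _ 0])
  moreover have "in_single_coset b P" unfolding P_def by (rule in_single_coset_image)
  ultimately show "\<exists>P. t \<in> P \<and> in_single_coset b P \<and> meets_windows_once a c P" by blast
next
  assume "\<exists>P. t \<in> P \<and> in_single_coset b P \<and> meets_windows_once a c P"
  then obtain P where P: "t \<in> P" "in_single_coset b P" "meets_windows_once a c P" by blast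
  define x where "x k = (if t + b * of_int k \<in> P then 1 else 0 :: real)" for k
  have x01: "\<forall>k. x k \<in> {0, 1}" and "x 0 = 1" using P(1) by (auto simp: x_def)
  have "(\<lambda>k. t + b * of_int k) ` {k. x k = 1} = P"
  proof
    show "P \<subseteq> (\<lambda>k. t + b * of_int k) ` {k. x k = 1}"
    proof
      fix p assume "p \<in> P"
      moreover obtain k where "p = t + b * of_int k"
        using P(1,2) \<open>p \<in> P\<close> unfolding in_single_coset_def by blast
      ultimately show "p \<in> (\<lambda>k. t + b * of_int k) ` {k. x k = 1}" by (auto simp: x_def)
    qed
  qed (auto simp: x_def split: if_splits)
  then have "Mapp a b c t x m = 1" for m
    using Mapp_eq_card[OF assms x01, of a c t m] P(3)
    unfolding meets_windows_once_def card_eq_1_iff_Ex1[symmetric] by simp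
  then show "t \<in> Sabc a b c"
    unfolding Sabc_def Bb0_def using x01 \<open>x 0 = 1\<close> by blast
qed

lemma rmod_decomp: "0 < a \<Longrightarrow> t = a * of_int \<lfloor>t / a\<rfloor> + t rmod a"
  by (simp add: rmod_def)

lemma rmod_add_eq:
  assumes "0 < a" "x = y + e + of_int n * a" "0 \<le> y rmod a + e" "y rmod a + e < a"
  shows "x rmod a = y rmod a + e"
  using assms by (intro rmod_unique[where n = "\<lfloor>y / a\<rfloor> + n"]) (auto simp: rmod_def algebra_simps)

lemma inmod_iff_rmod:
  assumes "0 < a" "s \<le> l" "u \<le> s + a"
  shows "inmod a l u t \<longleftrightarrow> l - s \<le> (t - s) rmod a \<and> (t - s) rmod a < u - s"
proof
  assume "inmod a l u t"
  then obtain k where k: "l \<le> t - a * of_int k" "t - a * of_int k < u" unfolding inmod_def by blast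
  have "(t - s) rmod a = t - s - a * of_int k"
    by (rule rmod_unique[where n = k]) (use assms k in auto)
  then show "l - s \<le> (t - s) rmod a \<and> (t - s) rmod a < u - s" using k by simp
next
  assume "l - s \<le> (t - s) rmod a \<and> (t - s) rmod a < u - s"
  then show "inmod a l u t"
    unfolding inmod_def using assms
    by (intro exI[of _ "\<lfloor>(t - s) / a\<rfloor>"]) (auto simp: rmod_def algebra_simps)
qed

lemma image_Int_coset_subset:
  assumes "f ` E \<subseteq> E" and shift: "\<And>s. \<exists>k::int. f s = s + b * of_int k"
  shows "f ` (E \<inter> range (\<lambda>k. t + b * of_int k)) \<subseteq> E \<inter> range (\<lambda>k. t + b * of_int k)"
proof
  fix y assume "y \<in> f ` (E \<inter> range (\<lambda>k. t + b * of_int k))"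
  then obtain s k0 where s: "s \<in> E" "s = t + b * of_int k0" "y = f s" by blast
  obtain k :: int where "f s = s + b * of_int k" using shift by blast
  then have "y = t + b * of_int (k0 + k)" using s(2,3) by (simp add: algebra_simps)
  moreover have "y \<in> E" using s(1,3) assms(1) by blast
  ultimately show "y \<in> E \<inter> range (\<lambda>k. t + b * of_int k)" by blast
qed

context
  fixes a b c :: real
  assumes abc: "0 < a" "a < b" "b < c" "b - a < c0 b c" "c0 b c < a"
begin

abbreviation "c\<^sub>0 \<equiv> c0 b c"
abbreviation "L \<equiv> \<lfloor>c / b\<rfloor>"

lemma b_pos: "0 < b"
  using abc by simp

lemma Lb_eq: "of_int L * b = c - c\<^sub>0"
  unfolding c0_def by simp

lemma b_le_Lb: "b \<le> of_int L * b"
proof -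
  have "1 \<le> L" using abc by (simp add: le_floor_iff le_divide_eq)
  then show ?thesis using abc by simp
qed

lemma rmod_bounds: "0 \<le> t rmod a" "t rmod a < a"
  using abc(1) by (simp_all add: rmod_nonneg rmod_less)

lemma R_eq: "R a b c t = (if t rmod a < c\<^sub>0 + a - b then t + of_int L * b + b
    else if t rmod a < c\<^sub>0 then t else t + of_int L * b)"
proof -
  have "inmod a 0 (c\<^sub>0 + a - b) t \<longleftrightarrow> t rmod a < c\<^sub>0 + a - b"
    "inmod a (c\<^sub>0 + a - b) c\<^sub>0 t \<longleftrightarrow> c\<^sub>0 + a - b \<le> t rmod a \<and> t rmod a < c\<^sub>0"
    "inmod a c\<^sub>0 a t \<longleftrightarrow> c\<^sub>0 \<le> t rmod a"
    using inmod_iff_rmod[of a 0 _ _ t] abc rmod_bounds[of t] by auto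
  then show ?thesis unfolding R_def by auto
qed

lemma H_iff: "t \<in> H a b c \<longleftrightarrow> c\<^sub>0 + a - b \<le> t rmod a \<and> t rmod a < c\<^sub>0"
  unfolding H_def using inmod_iff_rmod[of a 0 _ _ t] abc by auto

lemma Rt_eq: "Rt a b c t = (if (t + a - c) rmod a < a - c\<^sub>0 then t - of_int L * b
    else if (t + a - c) rmod a < b - c\<^sub>0 then t else t - of_int L * b - b)"
proof -
  have "inmod a (c - a) (c - c\<^sub>0) t \<longleftrightarrow> (t + a - c) rmod a < a - c\<^sub>0"
    "inmod a (c - c\<^sub>0) (c - c\<^sub>0 + b - a) t
      \<longleftrightarrow> a - c\<^sub>0 \<le> (t + a - c) rmod a \<and> (t + a - c) rmod a < b - c\<^sub>0"
    "inmod a (c - c\<^sub>0 + b - a) c t \<longleftrightarrow> b - c\<^sub>0 \<le> (t + a - c) rmod a"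
    using inmod_iff_rmod[of a "c - a" _ _ t] abc rmod_bounds[of "t + a - c"]
    by (auto simp: algebra_simps)
  then show ?thesis unfolding Rt_def by auto
qed

lemma Ht_iff: "t \<in> Ht a b c \<longleftrightarrow> a - c\<^sub>0 \<le> (t + a - c) rmod a \<and> (t + a - c) rmod a < b - c\<^sub>0"
  unfolding Ht_def using inmod_iff_rmod[of a "c - a" _ _ t] abc by (auto simp: algebra_simps)

lemma R_fixes_H: "t \<in> H a b c \<Longrightarrow> R a b c t = t"
  using R_eq H_iff by auto

lemma Rt_fixes_Ht: "t \<in> Ht a b c \<Longrightarrow> Rt a b c t = t"
  using Rt_eq Ht_iff by auto

lemma Rt_R: assumes "t \<notin> H a b c" shows "Rt a b c (R a b c t) = t"
proof (cases "t rmod a < c\<^sub>0 + a - b")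
  case True
  have R: "R a b c t = t + of_int L * b + b" using True R_eq by simp
  have "(R a b c t + a - c) rmod a = t rmod a + (b - c\<^sub>0)"
    using True abc rmod_bounds[of t] R Lb_eq by (intro rmod_add_eq[where n = 1]) auto
  then have "Rt a b c (R a b c t) = R a b c t - of_int L * b - b"
    using Rt_eq[of "R a b c t"] True abc rmod_bounds[of t] by simp
  then show ?thesis using R by simp
next
  case False
  then have r: "c\<^sub>0 \<le> t rmod a" using assms H_iff by auto
  have R: "R a b c t = t + of_int L * b" using r R_eq abc by simp
  have "(R a b c t + a - c) rmod a = t rmod a + - c\<^sub>0"
    using r abc rmod_bounds[of t] R Lb_eq by (intro rmod_add_eq[where n = 1]) auto
  then have "Rt a b c (R a b c t) = R a b c t - of_int L * b"
    using Rt_eq[of "R a b c t"] r abc rmod_bounds[of t] by simp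
  then show ?thesis using R by simp
qed

lemma R_Rt: assumes "t \<notin> Ht a b c" shows "R a b c (Rt a b c t) = t"
proof (cases "(t + a - c) rmod a < a - c\<^sub>0")
  case True
  have Rt: "Rt a b c t = t - of_int L * b" using True Rt_eq by simp
  have "Rt a b c t rmod a = (t + a - c) rmod a + c\<^sub>0"
    using True abc rmod_bounds[of "t + a - c"] Rt Lb_eq by (intro rmod_add_eq[where n = "-1"]) auto
  then have "R a b c (Rt a b c t) = Rt a b c t + of_int L * b"
    using R_eq[of "Rt a b c t"] True abc rmod_bounds[of "t + a - c"] by simp
  then show ?thesis using Rt by simp
next
  case False
  then have r: "b - c\<^sub>0 \<le> (t + a - c) rmod a" using assms Ht_iff by auto
  have Rt: "Rt a b c t = t - of_int L * b - b" using r Rt_eq abc by simp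
  have "Rt a b c t rmod a = (t + a - c) rmod a + (c\<^sub>0 - b)"
    using r abc rmod_bounds[of "t + a - c"] Rt Lb_eq by (intro rmod_add_eq[where n = "-1"]) auto
  then have "R a b c (Rt a b c t) = Rt a b c t + of_int L * b + b"
    using R_eq[of "Rt a b c t"] r abc rmod_bounds[of "t + a - c"] by simp
  then show ?thesis using Rt by simp
qed

lemma R_ge: "t \<notin> H a b c \<Longrightarrow> t + b \<le> R a b c t"
  using R_eq H_iff b_le_Lb abc by (auto split: if_splits)

lemma floor_R_minus_c: assumes "t \<notin> H a b c" shows "\<lfloor>(R a b c t - c) / a\<rfloor> = \<lfloor>t / a\<rfloor>"
proof -
  have t: "t = a * of_int \<lfloor>t / a\<rfloor> + t rmod a" by (rule rmod_decomp[OF abc(1)])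
  have "R a b c t - c = t + (b - c\<^sub>0) \<and> t rmod a < c\<^sub>0 + a - b \<or> R a b c t - c = t - c\<^sub>0 \<and> c\<^sub>0 \<le> t rmod a"
    using assms R_eq H_iff Lb_eq by auto
  then show ?thesis
    using t abc rmod_bounds[of t] by (subst floor_divide_eq_iff) (auto simp: algebra_simps)
qed

lemma R_in_coset: "\<exists>k::int. R a b c t = t + b * of_int k"
  using R_eq[of t] by (auto intro: exI[of _ "L + 1"] exI[of _ L] exI[of _ 0] simp: algebra_simps)

lemma Rt_in_coset: "\<exists>k::int. Rt a b c t = t + b * of_int k"
  using Rt_eq[of t] by (auto intro: exI[of _ "- L - 1"] exI[of _ "- L"] exI[of _ 0] simp: algebra_simps)

text \<open>\<open>R p\<close> is the point of \<open>p + b\<int>\<close> in the \<open>a\<close>-cell of \<open>p\<close> shifted by \<open>c\<close>, and \<open>Rt p\<close> the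
  point of \<open>p + b\<int>\<close> in the \<open>a\<close>-cell of \<open>p - c\<close>; if such a point exists, \<open>p\<close> lies off \<open>H\<close>,
  resp. \<open>Ht\<close>.\<close>

lemma R_eq_point_in_cell:
  assumes "q = p + b * of_int k" "p - p rmod a + c \<le> q" "q < p - p rmod a + a + c"
  shows "p \<notin> H a b c \<and> R a b c p = q"
proof -
  define r where "r = p rmod a"
  have r: "0 \<le> r" "r < a" unfolding r_def using rmod_bounds by auto
  have n: "c\<^sub>0 - r \<le> b * of_int (k - L)" "b * of_int (k - L) < a + c\<^sub>0 - r"
    and q_eq: "q = p + of_int L * b + b * of_int (k - L)"
    using assms Lb_eq unfolding r_def by (auto simp: algebra_simps)
  have "b * of_int (-1) < b * of_int (k - L)" "b * of_int (k - L) < b * of_int 2"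
    using n r abc by linarith+
  then have "-1 < k - L" "k - L < 2"
    using b_pos by (simp_all only: mult_less_cancel_left_pos of_int_less_iff)
  then consider "k - L = 0" | "k - L = 1" by linarith
  then show ?thesis
  proof cases
    case 1
    then have "c\<^sub>0 \<le> r" using n by simp
    then show ?thesis using 1 q_eq abc by (auto simp: R_eq H_iff r_def)
  next
    case 2
    then have "r < c\<^sub>0 + a - b" using n by simp
    then show ?thesis using 2 q_eq abc by (auto simp: R_eq H_iff r_def)
  qed
qed

lemma Rt_eq_point_in_cell:
  assumes "q = p + b * of_int k"
    "p - c - (p + a - c) rmod a \<le> q" "q < p - c - (p + a - c) rmod a + a"
  shows "p \<notin> Ht a b c \<and> Rt a b c p = q"
proof -
  define r where "r = (p + a - c) rmod a"
  have r: "0 \<le> r" "r < a" unfolding r_def using rmod_bounds by auto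
  have n: "- r - c\<^sub>0 \<le> b * of_int (k + L)" "b * of_int (k + L) < a - r - c\<^sub>0"
    and q_eq: "q = p - of_int L * b + b * of_int (k + L)"
    using assms Lb_eq unfolding r_def by (auto simp: algebra_simps)
  have "b * of_int (-2) < b * of_int (k + L)" "b * of_int (k + L) < b * of_int 1"
    using n r abc by linarith+
  then have "-2 < k + L" "k + L < 1"
    using b_pos by (simp_all only: mult_less_cancel_left_pos of_int_less_iff)
  then consider "k + L = 0" | "k + L = -1" by linarith
  then show ?thesis
  proof cases
    case 1
    then have "r < a - c\<^sub>0" using n by simp
    then show ?thesis using 1 q_eq abc by (auto simp: Rt_eq Ht_iff r_def)
  next
    case 2
    then have "b - c\<^sub>0 \<le> r" using n by simp
    then show ?thesis using 2 q_eq abc by (auto simp: Rt_eq Ht_iff r_def)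
  qed
qed

lemma meets_windows_once_R:
  assumes P: "meets_windows_once a c P" "in_single_coset b P" and "p \<in> P"
  shows "p \<notin> H a b c \<and> R a b c p \<in> P"
proof -
  define j where "j = \<lfloor>p / a\<rfloor>"
  have p: "p - p rmod a = a * of_int j"
    using rmod_decomp[OF abc(1), of p] unfolding j_def by simp
  obtain q where q: "q \<in> P" "a * of_int (j + 1) \<le> q" "q < a * of_int (j + 1) + c"
    using meets_windows_once_exists[OF P(1)] by blast
  have "a * of_int j + c \<le> q"
  proof (rule ccontr)
    assume "\<not> ?thesis"
    then have "a * of_int j \<le> q" "q < a * of_int j + c"
      using q(2) abc(1) by (simp_all add: algebra_simps)
    moreover have "a * of_int j \<le> p" "p < a * of_int j + c"
      using p rmod_bounds[of p] abc by auto
    ultimately have "p = q" using meets_windows_once_unique[OF P(1) \<open>p \<in> P\<close> _ _ q(1)] by blast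
    then show False using p q(2) rmod_bounds[of p] by (simp add: algebra_simps)
  qed
  moreover obtain k :: int where "q = p + b * of_int k"
    using P(2) \<open>p \<in> P\<close> q(1) unfolding in_single_coset_def by blast
  ultimately show ?thesis using R_eq_point_in_cell p q by (simp add: algebra_simps)
qed

lemma meets_windows_once_Rt:
  assumes P: "meets_windows_once a c P" "in_single_coset b P" and "p \<in> P"
  shows "p \<notin> Ht a b c \<and> Rt a b c p \<in> P"
proof -
  define j where "j = \<lfloor>(p + a - c) / a\<rfloor>"
  have p: "p - c - (p + a - c) rmod a = a * of_int (j - 1)"
    using rmod_decomp[OF abc(1), of "p + a - c"] unfolding j_def by (simp add: algebra_simps)
  obtain q where q: "q \<in> P" "a * of_int (j - 1) \<le> q" "q < a * of_int (j - 1) + c"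
    using meets_windows_once_exists[OF P(1)] by blast
  have "q < a * of_int j"
  proof (rule ccontr)
    assume "\<not> ?thesis"
    then have "a * of_int j \<le> q" "q < a * of_int j + c"
      using q(3) abc(1) by (simp_all add: algebra_simps)
    moreover have "a * of_int j \<le> p" "p < a * of_int j + c"
      using p rmod_bounds[of "p + a - c"] abc by (auto simp: algebra_simps)
    ultimately have "p = q" using meets_windows_once_unique[OF P(1) \<open>p \<in> P\<close> _ _ q(1)] by blast
    then show False using p q(3) rmod_bounds[of "p + a - c"] by (simp add: algebra_simps)
  qed
  moreover obtain k :: int where "q = p + b * of_int k"
    using P(2) \<open>p \<in> P\<close> q(1) unfolding in_single_coset_def by blast
  ultimately show ?thesis using Rt_eq_point_in_cell p q by (simp add: algebra_simps)
qed

lemma Sabc_R: assumes "t \<in> Sabc a b c" shows "t \<notin> H a b c \<and> R a b c t \<in> Sabc a b c"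
proof -
  obtain P where P: "t \<in> P" "in_single_coset b P" "meets_windows_once a c P"
    using assms Sabc_iff[OF b_pos] by auto
  then show ?thesis using meets_windows_once_R Sabc_iff[OF b_pos] by metis
qed

lemma Sabc_Rt: assumes "t \<in> Sabc a b c" shows "t \<notin> Ht a b c \<and> Rt a b c t \<in> Sabc a b c"
proof -
  obtain P where P: "t \<in> P" "in_single_coset b P" "meets_windows_once a c P"
    using assms Sabc_iff[OF b_pos] by auto
  then show ?thesis using meets_windows_once_Rt Sabc_iff[OF b_pos] by metis
qed

lemma invariant_subset_Sabc:
  assumes "R a b c ` E \<subseteq> E" "Rt a b c ` E \<subseteq> E" "E \<inter> (H a b c \<union> Ht a b c) = {}"
  shows "E \<subseteq> Sabc a b c"
proof
  fix t assume "t \<in> E"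
  define E' where "E' = E \<inter> range (\<lambda>k. t + b * of_int k)"
  have E'_inv: "R a b c ` E' \<subseteq> E'" "Rt a b c ` E' \<subseteq> E'"
    unfolding E'_def
    by (rule image_Int_coset_subset[OF assms(1) R_in_coset],
        rule image_Int_coset_subset[OF assms(2) Rt_in_coset])
  have R_Rt_E': "R a b c (Rt a b c x) = x" if "x \<in> E'" for x
    using that assms(3) R_Rt unfolding E'_def by blast
  have "t \<in> E'" unfolding E'_def using \<open>t \<in> E\<close> by (auto intro: range_eqI[of _ _ 0])
  obtain p :: "int \<Rightarrow> real"
    where p: "p 0 = t" "\<And>i. p i \<in> E'" "\<And>i. p (i + 1) = R a b c (p i)"
    using E'_inv R_Rt_E' \<open>t \<in> E'\<close> by (rule two_sided_orbit) auto
  have notin_H: "p i \<notin> H a b c" for i using p(2)[of i] assms(3) unfolding E'_def by blast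
  have "meets_windows_once a c (range p)"
  proof (rule meets_windows_once_range)
    show "p i + a \<le> p (i + 1)" for i using R_ge[OF notin_H, of i] p(3)[of i] abc(2) by linarith
    show "\<lfloor>(p (i + 1) - c) / a\<rfloor> = \<lfloor>p i / a\<rfloor>" for i using floor_R_minus_c[OF notin_H] p(3) by simp
  qed (use abc in auto)
  moreover have "in_single_coset b (range p)"
    using p(2) in_single_coset_image[of b t UNIV] unfolding E'_def in_single_coset_def by blast
  ultimately show "t \<in> Sabc a b c" using Sabc_iff[OF b_pos] p(1) by (metis rangeI)
qed

end

theorem theorem4p1:
  fixes a b c :: real
  assumes "0 < a" "a < b" "b < c" "b - a < c0 b c" "c0 b c < a"
  shows "(R a b c ` Sabc a b c \<subseteq> Sabc a b c \<and> Rt a b c ` Sabc a b c \<subseteq> Sabc a b c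
           \<and> Sabc a b c \<inter> (H a b c \<union> Ht a b c) = {}
           \<and> (\<forall>E::real set. R a b c ` E \<subseteq> E \<and> Rt a b c ` E \<subseteq> E
                 \<and> E \<inter> (H a b c \<union> Ht a b c) = {} \<longrightarrow> E \<subseteq> Sabc a b c))
       \<and> (R a b c ` (- Sabc a b c) \<subseteq> - Sabc a b c \<and> Rt a b c ` (- Sabc a b c) \<subseteq> - Sabc a b c
           \<and> H a b c \<union> Ht a b c \<subseteq> - Sabc a b c
           \<and> (\<forall>F::real set. R a b c ` F \<subseteq> F \<and> Rt a b c ` F \<subseteq> F
                 \<and> H a b c \<union> Ht a b c \<subseteq> F \<longrightarrow> - Sabc a b c \<subseteq> F))"
proof -
  have inv: "R a b c ` Sabc a b c \<subseteq> Sabc a b c" "Rt a b c ` Sabc a b c \<subseteq> Sabc a b c"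
    and disj: "Sabc a b c \<inter> (H a b c \<union> Ht a b c) = {}"
    using Sabc_R[OF assms] Sabc_Rt[OF assms] by blast+
  have greatest: "\<forall>E::real set. R a b c ` E \<subseteq> E \<and> Rt a b c ` E \<subseteq> E
      \<and> E \<inter> (H a b c \<union> Ht a b c) = {} \<longrightarrow> E \<subseteq> Sabc a b c"
    using invariant_subset_Sabc[OF assms] by blast
  show ?thesis
    using inv disj greatest
      greatest_invariant_Compl[OF R_fixes_H[OF assms] Rt_fixes_Ht[OF assms]
        Rt_R[OF assms] R_Rt[OF assms] inv disj greatest]
    by blast
qed

end
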